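(* Let $m\ge4$ be an integer and $d=\lfloor m/2\rfloor$. For $0\le i\le d$ let $m_i=\binom{2m}{2i}-\binom{2m}{2i-1}$ (with $\binom{2m}{-1}=0$) be the eigenvalue multiplicities of the folded Johnson graph $\overline{J}(2m,m)$. Then $m_i^2\ge m_{i-1}m_{i+1}$ for all $1\le i\le d-1$.
   Context: The folded Johnson graph $\overline{J}(2m,m)$ is the quotient of the Johnson graph $J(2m,m)$ (vertices the $m$-subsets of a $2m$-set, adjacent when they meet in $m-1$ elements) obtained by identifying each $m$-subset with its complement; it is distance-regular of diameter $\lfloor m/2\rfloor$, and in the standard ordering its eigenvalue multiplicities are $m_i=\binom{2m}{2i}-\binom{2m}{2i-1}$. *)

theory Defs
  imports Main
begin

definition fj_mult :: "nat \<Rightarrow> nat \<Rightarrow> int" where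
  "fj_mult m i = int ((2*m) choose (2*i)) - (if i = 0 then 0 else int ((2*m) choose (2*i - 1)))"

end

theory Submission
  imports Defs
begin

text \<open>With N = 2m + 1, Pascal's rule and the absorption identity turn N m_i into
the ballot-type term C(N,2i) (N - 4i). The terms C(N,j) (N - 2j) form a log-concave
sequence, since the binomial coefficients do and (u + 2)(u - 2) \<le> u^2 for
u = N - 2j - 2; chaining two consecutive such inequalities skips the odd indices.\<close>

lemma Suc_times_binomial_Suc: "Suc k * (n choose Suc k) = (n - k) * (n choose k)"
  by (simp only: binomial_absorption binomial_absorb_comp)

lemma Suc_times_binomial_Suc_int:
  "(int k + 1) * int (n choose Suc k) = (int n - int k) * int (n choose k)"
proof (cases "k \<le> n")
  case True
  then show ?thesis
    using arg_cong[OF Suc_times_binomial_Suc[of k n], of int] by (simp add: of_nat_diff algebra_simps)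
next
  case False
  then show ?thesis by (simp add: binomial_eq_0)
qed

lemma binomial_log_concave: "(n choose k) * (n choose Suc (Suc k)) \<le> (n choose Suc k)\<^sup>2"
proof -
  have "(n choose k) * (n choose Suc (Suc k)) * (Suc k * Suc (Suc k))
      = (Suc k * (n choose k)) * (Suc (Suc k) * (n choose Suc (Suc k)))"
    by (simp only: mult_ac)
  also have "\<dots> = (Suc k * (n choose k)) * ((n - Suc k) * (n choose Suc k))"
    by (simp only: Suc_times_binomial_Suc)
  also have "\<dots> \<le> (Suc (Suc k) * (n choose k)) * ((n - k) * (n choose Suc k))"
    by (intro mult_le_mono mult_le_mono1) auto
  also have "\<dots> = (Suc (Suc k) * (n choose Suc k)) * ((n - k) * (n choose k))"
    by (simp only: mult_ac)
  also have "\<dots> = (Suc (Suc k) * (n choose Suc k)) * (Suc k * (n choose Suc k))"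
    by (simp only: Suc_times_binomial_Suc[symmetric])
  also have "\<dots> = (n choose Suc k)\<^sup>2 * (Suc k * Suc (Suc k))"
    by (simp only: power2_eq_square mult_ac)
  finally show ?thesis
    by (rule mult_right_le_imp_le) simp
qed

definition ballot_term :: "nat \<Rightarrow> nat \<Rightarrow> int" where
  "ballot_term N j = int (N choose j) * (int N - 2 * int j)"

lemma ballot_term_eq_binomial_diff:
  "int (Suc n) * (int (n choose j) - (if j = 0 then 0 else int (n choose (j - 1))))
     = ballot_term (Suc n) j"
proof (cases j)
  case 0
  then show ?thesis by (simp add: ballot_term_def)
next
  case (Suc t)
  have "ballot_term (Suc n) j
      = (int (n choose t) + int (n choose Suc t)) * (int n - 2 * int t - 1)"
    using Suc by (simp add: ballot_term_def)
  also have "\<dots> = (int n + 1) * (int (n choose Suc t) - int (n choose t))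
      - 2 * ((int t + 1) * int (n choose Suc t) - (int n - int t) * int (n choose t))"
    by (simp add: algebra_simps)
  also have "\<dots> = (int n + 1) * (int (n choose Suc t) - int (n choose t))"
    by (simp add: Suc_times_binomial_Suc_int)
  finally show ?thesis
    using Suc by simp
qed

lemma ballot_term_pos: "2 * j < N \<Longrightarrow> 0 < ballot_term N j"
  unfolding ballot_term_def by (intro mult_pos_pos) auto

lemma ballot_term_log_concave:
  assumes "2 * j + 4 \<le> N"
  shows "ballot_term N j * ballot_term N (Suc (Suc j)) \<le> (ballot_term N (Suc j))\<^sup>2"
proof -
  define u where "u = int N - 2 * int j - 2"
  have "2 \<le> u"
    using assms unfolding u_def by simp
  have "ballot_term N j * ballot_term N (Suc (Suc j))
      = int ((N choose j) * (N choose Suc (Suc j))) * ((u + 2) * (u - 2))"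
    unfolding ballot_term_def u_def by (simp add: algebra_simps)
  also have "\<dots> \<le> int ((N choose Suc j)\<^sup>2) * u\<^sup>2"
  proof (rule mult_mono)
    show "int ((N choose j) * (N choose Suc (Suc j))) \<le> int ((N choose Suc j)\<^sup>2)"
      unfolding of_nat_le_iff by (rule binomial_log_concave)
    show "(u + 2) * (u - 2) \<le> u\<^sup>2"
      by (simp add: algebra_simps power2_eq_square)
    show "0 \<le> (u + 2) * (u - 2)"
      using \<open>2 \<le> u\<close> by simp
  qed simp
  also have "\<dots> = (ballot_term N (Suc j))\<^sup>2"
    unfolding ballot_term_def u_def by (simp add: algebra_simps power2_eq_square)
  finally show ?thesis .
qed

lemma log_concave_skip:
  fixes a b c d e :: "'a::linordered_idom"
  assumes "0 \<le> a" "0 \<le> b" "0 < c" "0 \<le> d" "0 \<le> e"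
    and "a * c \<le> b\<^sup>2" "b * d \<le> c\<^sup>2" "c * e \<le> d\<^sup>2"
  shows "a * e \<le> c\<^sup>2"
proof -
  have "c\<^sup>2 * (a * e) = (a * c) * (c * e)"
    by (simp add: algebra_simps power2_eq_square)
  also have "\<dots> \<le> b\<^sup>2 * d\<^sup>2"
    by (rule mult_mono) (use assms in auto)
  also have "\<dots> = (b * d)\<^sup>2"
    by (simp add: power_mult_distrib)
  also have "\<dots> \<le> (c\<^sup>2)\<^sup>2"
    by (rule power_mono) (use assms in auto)
  also have "\<dots> = c\<^sup>2 * c\<^sup>2"
    by (simp add: power2_eq_square)
  finally show ?thesis
    by (rule mult_left_le_imp_le) (use \<open>0 < c\<close> in simp)
qed

lemma ballot_term_log_concave_skip:
  assumes "2 * j + 8 < N"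
  shows "ballot_term N j * ballot_term N (j + 4) \<le> (ballot_term N (j + 2))\<^sup>2"
proof -
  have pos: "0 < ballot_term N (j + l)" if "l \<le> 4" for l
    using assms that by (intro ballot_term_pos) simp
  have lc: "ballot_term N (j + l) * ballot_term N (j + l + 2) \<le> (ballot_term N (j + l + 1))\<^sup>2"
    if "l \<le> 2" for l
    using ballot_term_log_concave[of "j + l" N] assms that by simp
  show ?thesis
  proof (rule log_concave_skip[where b = "ballot_term N (j + 1)" and d = "ballot_term N (j + 3)"])
    show "ballot_term N j * ballot_term N (j + 2) \<le> (ballot_term N (j + 1))\<^sup>2"
      using lc[of 0] by simp
    show "ballot_term N (j + 1) * ballot_term N (j + 3) \<le> (ballot_term N (j + 2))\<^sup>2"
      using lc[of 1] by (simp add: numeral_eq_Suc)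
    show "ballot_term N (j + 2) * ballot_term N (j + 4) \<le> (ballot_term N (j + 3))\<^sup>2"
      using lc[of 2] by (simp add: numeral_eq_Suc)
  qed (use pos[of 0] pos[of 1] pos[of 2] pos[of 3] pos[of 4] in simp_all)
qed

lemma fj_mult_eq_ballot_term: "int (Suc (2 * m)) * fj_mult m l = ballot_term (Suc (2 * m)) (2 * l)"
  unfolding fj_mult_def using ballot_term_eq_binomial_diff[of "2 * m" "2 * l"] by simp

theorem corollary6:
  fixes m i :: nat
  assumes "m \<ge> 4"
    and "1 \<le> i" and "i \<le> m div 2 - 1"
  shows "(fj_mult m i)^2 \<ge> fj_mult m (i - 1) * fj_mult m (i + 1)"
proof -
  define N where "N = Suc (2 * m)"
  obtain k where i: "i = Suc k"
    using \<open>1 \<le> i\<close> by (cases i) auto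
  have "2 * (2 * k) + 8 < N"
    using assms unfolding i N_def by linarith
  then have "ballot_term N (2 * k) * ballot_term N (2 * (k + 2)) \<le> (ballot_term N (2 * Suc k))\<^sup>2"
    using ballot_term_log_concave_skip[of "2 * k" N] by (simp add: numeral_eq_Suc)
  then have "(int N)\<^sup>2 * (fj_mult m k * fj_mult m (k + 2)) \<le> (int N)\<^sup>2 * (fj_mult m (Suc k))\<^sup>2"
    unfolding N_def fj_mult_eq_ballot_term[symmetric] by (simp only: power2_eq_square mult_ac)
  then show ?thesis
    unfolding i N_def by simp
qed

end
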